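(* Let $V$ be a toroidal vertex algebra. For $\mathbf{m}\in\mathbb{Z}^r$ set $V_{(\mathbf{m})}=\{v_{-1,-\mathbf{m}}\mathbf{1}\mid v\in V\}$. Then $V^0=\bigoplus_{\mathbf{m}\in\mathbb{Z}^r}V_{(\mathbf{m})}$, and with this grading the vertex algebra $(V^0,Y^0,\mathbf{1})$ is a vertex $\mathbb{Z}^r$-graded algebra.
   Context: Fix a positive integer $r$. Write $\mathbf{x}=(x_1,\dots,x_r)$, $\mathbf{x}^{\mathbf{m}}=x_1^{m_1}\cdots x_r^{m_r}$ (similarly for other variables), $\mathbf{z}\mathbf{y}=(z_1y_1,\dots,z_ry_r)$. For a vector space $W$ put $\mathcal{E}(W,r)=\mathrm{Hom}(W,W[[x_1^{\pm1},\dots,x_r^{\pm1}]]((x_0)))$. A toroidal vertex algebra is a vector space $V$ with a linear map $Y(\cdot;x_0,\mathbf{x}):V\to\mathcal{E}(V,r)$, $v\mapsto\sum_{(m_0,\mathbf{m})\in\mathbb{Z}\times\mathbb{Z}^r}v_{m_0,\mathbf{m}}x_0^{-m_0-1}\mathbf{x}^{-\mathbf{m}}$, and a vector $\mathbf{1}$ with $Y(\mathbf{1};x_0,\mathbf{x})v=v$, $Y(v;x_0,\mathbf{x})\mathbf{1}\in V[[x_0,x_1^{\pm1},\dots,x_r^{\pm1}]]$, and the Jacobi identity $$z_0^{-1}\delta\!\left(\tfrac{x_0-y_0}{z_0}\right)Y(u;x_0,\mathbf{z}\mathbf{y})Y(v;y_0,\mathbf{y})-z_0^{-1}\delta\!\left(\tfrac{y_0-x_0}{-z_0}\right)Y(v;y_0,\mathbf{y})Y(u;x_0,\mathbf{z}\mathbf{y})=y_0^{-1}\delta\!\left(\tfrac{x_0-z_0}{y_0}\right)Y(Y(u;z_0,\mathbf{z})v;y_0,\mathbf{y})$$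 for all $u,v$, where $Y(u;x_0,\mathbf{z}\mathbf{y})=\sum u_{m_0,\mathbf{m}}x_0^{-m_0-1}\mathbf{z}^{-\mathbf{m}}\mathbf{y}^{-\mathbf{m}}$. $V^0=\mathrm{span}\{v_{m_0,\mathbf{m}}\mathbf{1}\}$; for $v\in V^0$, $Y(v;x_0,\mathbf{x})$ is a Laurent polynomial in $x_1,\dots,x_r$ and $Y^0(v,x_0)=Y(v;x_0,\mathbf{x})|_{\mathbf{x}=1}$ makes $(V^0,Y^0,\mathbf{1})$ a vertex algebra. A vertex $\mathbb{Z}^r$-graded algebra is a vertex algebra $U$ with a grading $U=\bigoplus_{\mathbf{m}\in\mathbb{Z}^r}U_{(\mathbf{m})}$ such that $\mathbf{1}\in U_{(\mathbf{0})}$ and $u_kv\in U_{(\mathbf{m}+\mathbf{n})}$ for $u\in U_{(\mathbf{m})}$, $v\in U_{(\mathbf{n})}$, $k\in\mathbb{Z}$. *)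

theory Defs
  imports Complex_Main "HOL-Library.Groups_Big_Fun"
begin

(* Conventions.
   - The ground field is the complex numbers; a vector space V is a type 'v together with a
     scalar multiplication  scale :: complex => 'v => 'v  satisfying the vector_space axioms.
   - Z^r is represented by functions  'r => int  where 'r is a finite (nonempty) index type,
     r = CARD('r).
   - A toroidal field operator Y(v;x0,x) = sum v_{m0,m} x0^(-m0-1) x^(-m) is given by its
     modes:  Y v m0 m w = v_{m0,m} w.
   - "Infinite" sums that are finite because of truncation are written with Sum_any
     (the sum over the finite support). *)

text \<open>The Jacobi identity of a toroidal vertex algebra, written out coefficientwise: the
coefficient of  x0^(-p-1) y0^(-q-1) z0^(-n-1) z^(-m) y^(-k)  applied to w.\<close>

definition toroidal_jacobi ::
  "(complex \<Rightarrow> 'v::ab_group_add \<Rightarrow> 'v) \<Rightarrow> ('v \<Rightarrow> int \<Rightarrow> ('r \<Rightarrow> int) \<Rightarrow> 'v \<Rightarrow> 'v) \<Rightarrow> bool" where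
  "toroidal_jacobi scale Y \<longleftrightarrow>
    (\<forall>u v w p q n m k.
      Sum_any (\<lambda>i::nat. scale (of_int p gchoose i)
                 (Y (Y u (n + int i) m v) (p + q - int i) k w))
      = Sum_any (\<lambda>i::nat. scale ((-1) ^ i * (of_int n gchoose i))
                 (Y u (p + n - int i) m (Y v (q + int i) (\<lambda>j. k j - m j) w)
                  - scale ((-1) powi n) (Y v (n + q - int i) (\<lambda>j. k j - m j) (Y u (p + int i) m w)))))"

definition toroidal_vertex_algebra ::
  "(complex \<Rightarrow> 'v::ab_group_add \<Rightarrow> 'v) \<Rightarrow> ('v \<Rightarrow> int \<Rightarrow> ('r \<Rightarrow> int) \<Rightarrow> 'v \<Rightarrow> 'v) \<Rightarrow> 'v \<Rightarrow> bool" where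
  "toroidal_vertex_algebra scale Y vac \<longleftrightarrow>
    vector_space scale
    \<comment> \<open>Y : V -> E(V,r) is linear and takes values in linear maps\<close>
    \<and> (\<forall>m0 m w. Vector_Spaces.linear scale scale (\<lambda>v. Y v m0 m w))
    \<and> (\<forall>v m0 m. Vector_Spaces.linear scale scale (Y v m0 m))
    \<comment> \<open>Y(v;x0,x)w lies in V[[x^{\<pm>1}]]((x0))\<close>
    \<and> (\<forall>v w. \<exists>N. \<forall>m0 \<ge> N. \<forall>m. Y v m0 m w = 0)
    \<comment> \<open>Y(1;x0,x)v = v\<close>
    \<and> (\<forall>m0 m v. Y vac m0 m v = (if m0 = -1 \<and> m = (\<lambda>_. 0) then v else 0))
    \<comment> \<open>Y(v;x0,x)1 lies in V[[x0,x^{\<pm>1}]]\<close>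
    \<and> (\<forall>v m0 m. m0 \<ge> 0 \<longrightarrow> Y v m0 m vac = 0)
    \<and> toroidal_jacobi scale Y"

definition V0 :: "(complex \<Rightarrow> 'v::ab_group_add \<Rightarrow> 'v) \<Rightarrow> ('v \<Rightarrow> int \<Rightarrow> ('r \<Rightarrow> int) \<Rightarrow> 'v \<Rightarrow> 'v) \<Rightarrow> 'v \<Rightarrow> 'v set" where
  "V0 scale Y vac = module.span scale {Y v m0 m vac | v m0 m. True}"

text \<open>Y^0(v,x0) = Y(v;x0,x) at x = 1, in modes: v_k^0 w = sum over m of v_{k,m} w.\<close>
definition Y0 :: "('v::ab_group_add \<Rightarrow> int \<Rightarrow> ('r \<Rightarrow> int) \<Rightarrow> 'v \<Rightarrow> 'v) \<Rightarrow> 'v \<Rightarrow> int \<Rightarrow> 'v \<Rightarrow> 'v" where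
  "Y0 Y v k w = Sum_any (\<lambda>m. Y v k m w)"

definition Vgr :: "('v \<Rightarrow> int \<Rightarrow> ('r \<Rightarrow> int) \<Rightarrow> 'v \<Rightarrow> 'v) \<Rightarrow> 'v \<Rightarrow> ('r \<Rightarrow> int) \<Rightarrow> 'v set" where
  "Vgr Y vac m = {Y v (-1) (\<lambda>j. - m j) vac | v. True}"

definition internal_direct_sum ::
  "(complex \<Rightarrow> 'v::ab_group_add \<Rightarrow> 'v) \<Rightarrow> ('i \<Rightarrow> 'v set) \<Rightarrow> 'v set \<Rightarrow> bool" where
  "internal_direct_sum scale W S \<longleftrightarrow>
    (\<forall>i. module.subspace scale (W i))
    \<and> S = module.span scale (\<Union>i. W i)
    \<and> (\<forall>F x. finite F \<longrightarrow> (\<forall>i\<in>F. x i \<in> W i) \<longrightarrow> sum x F = 0 \<longrightarrow> (\<forall>i\<in>F. x i = 0))"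

text \<open>A vertex algebra (U, Y, 1) where U is a subspace of the vector space (type 'v, scale),
  Y given by modes  Y u k v = u_k v  (Y(u,x) = sum u_k x^(-k-1)); Jacobi identity in
  components (Borcherds identity).\<close>
definition vertex_algebra ::
  "(complex \<Rightarrow> 'v::ab_group_add \<Rightarrow> 'v) \<Rightarrow> 'v set \<Rightarrow> ('v \<Rightarrow> int \<Rightarrow> 'v \<Rightarrow> 'v) \<Rightarrow> 'v \<Rightarrow> bool" where
  "vertex_algebra scale U Y vac \<longleftrightarrow>
    vector_space scale
    \<and> module.subspace scale U
    \<and> vac \<in> U
    \<and> (\<forall>u\<in>U. \<forall>v\<in>U. \<forall>k. Y u k v \<in> U)
    \<comment> \<open>linearity of Y in both arguments (on U)\<close>
    \<and> (\<forall>k. \<forall>a. \<forall>u\<in>U. \<forall>u'\<in>U. \<forall>v\<in>U. Y (scale a u + u') k v = scale a (Y u k v) + Y u' k v)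
    \<and> (\<forall>k. \<forall>a. \<forall>u\<in>U. \<forall>v\<in>U. \<forall>v'\<in>U. Y u k (scale a v + v') = scale a (Y u k v) + Y u k v')
    \<comment> \<open>truncation: Y(u,x)v in U((x))\<close>
    \<and> (\<forall>u\<in>U. \<forall>v\<in>U. \<exists>N. \<forall>k\<ge>N. Y u k v = 0)
    \<comment> \<open>vacuum property Y(1,x) = id\<close>
    \<and> (\<forall>v\<in>U. \<forall>k. Y vac k v = (if k = -1 then v else 0))
    \<comment> \<open>creation property: Y(v,x)1 in U[[x]] and its constant term is v\<close>
    \<and> (\<forall>v\<in>U. (\<forall>k\<ge>0. Y v k vac = 0) \<and> Y v (-1) vac = v)
    \<comment> \<open>Jacobi identity, coefficient of x0^(-p-1) y0^(-q-1) z0^(-n-1)\<close>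
    \<and> (\<forall>u\<in>U. \<forall>v\<in>U. \<forall>w\<in>U. \<forall>p q n.
      Sum_any (\<lambda>i::nat. scale (of_int p gchoose i) (Y (Y u (n + int i) v) (p + q - int i) w))
      = Sum_any (\<lambda>i::nat. scale ((-1) ^ i * (of_int n gchoose i))
                 (Y u (p + n - int i) (Y v (q + int i) w)
                  - scale ((-1) powi n) (Y v (n + q - int i) (Y u (p + int i) w)))))"

definition vertex_graded_algebra ::
  "(complex \<Rightarrow> 'v::ab_group_add \<Rightarrow> 'v) \<Rightarrow> 'v set \<Rightarrow> ('v \<Rightarrow> int \<Rightarrow> 'v \<Rightarrow> 'v) \<Rightarrow> 'v
     \<Rightarrow> (('r \<Rightarrow> int) \<Rightarrow> 'v set) \<Rightarrow> bool" where
  "vertex_graded_algebra scale U Y vac G \<longleftrightarrow>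
    vertex_algebra scale U Y vac
    \<and> internal_direct_sum scale G U
    \<and> vac \<in> G (\<lambda>_. 0)
    \<and> (\<forall>m n u v k. u \<in> G m \<longrightarrow> v \<in> G n \<longrightarrow> Y u k v \<in> G (\<lambda>j. m j + n j))"

end

theory Submission
  imports Defs
begin

text \<open>Setting p = 0 in the Jacobi identity expresses the modes of an iterate Y(Y(u;z0,z)v;y0,y)
  through those of u and v. For v = 1 this shows that the field of u_{n,c}1 only has modes of
  toroidal degree c and that (u_{n,c}1)_{-1,c}1 = u_{n,c}1. Hence the space {v_{-1,c}1} =
  V_(-c) contains every u_{n,c}1, each element of V^0 is the finite sum of its components
  v_{-1,c}1, and taking components proves directness. Expanding (u_{n,a}y)_{q,a+b}1 in the same
  way and inducting on -q gives u_{n,a}V_(-b) \<subseteq> V_(-a-b). On V_(-a) the field Y^0 is the single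
  coefficient of x^(-a) of Y, so the Jacobi identity of Y^0 for homogeneous arguments is an
  instance of the toroidal one; it extends to V^0 because both sides of the Borcherds identity
  are bi-additive.\<close>

lemma finite_shifted_support:
  fixes f :: "int \<Rightarrow> 'a::zero"
  assumes "\<forall>k\<ge>N. f k = 0"
  shows "finite {i::nat. f (n + int i) \<noteq> 0}"
proof (rule finite_subset)
  show "{i::nat. f (n + int i) \<noteq> 0} \<subseteq> {..<nat (N - n)}"
  proof
    fix i assume "i \<in> {i::nat. f (n + int i) \<noteq> 0}"
    then have "n + int i < N" using assms by (metis mem_Collect_eq not_le)
    then show "i \<in> {..<nat (N - n)}" by simp
  qed
qed simp

lemma (in module) Sum_any_in_subspace:
  assumes "subspace S" and "\<And>i. f i \<noteq> 0 \<Longrightarrow> f i \<in> S"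
  shows "Sum_any f \<in> S"
  unfolding Sum_any.expand_set using assms by (auto intro: subspace_sum)

lemma Sum_any_eq_single:
  assumes "\<And>i. i \<noteq> a \<Longrightarrow> f i = (0::'a::comm_monoid_add)"
  shows "Sum_any f = f a"
  using Sum_any.expand_superset[of "{a}" f] assms by fastforce

lemma Sum_any_split_off:
  fixes f :: "'i \<Rightarrow> 'a::comm_monoid_add"
  assumes "finite {i. f i \<noteq> 0}"
  shows "Sum_any f = f a + Sum_any (f(a := 0))"
proof -
  have "finite {i. (f(a := 0)) i \<noteq> 0}"
    by (rule rev_finite_subset[OF assms]) auto
  then have "Sum_any ((f(a := 0))(a := f a)) = f a + Sum_any (f(a := 0))"
    by (rule Sum_any.update) simp
  then show ?thesis by simp
qed

definition borcherds_lhs ::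
  "(complex \<Rightarrow> 'v::ab_group_add \<Rightarrow> 'v) \<Rightarrow> ('v \<Rightarrow> int \<Rightarrow> 'v \<Rightarrow> 'v) \<Rightarrow> 'v \<Rightarrow> 'v \<Rightarrow> 'v
     \<Rightarrow> int \<Rightarrow> int \<Rightarrow> int \<Rightarrow> 'v" where
  "borcherds_lhs scale Z u v w p q n =
     Sum_any (\<lambda>i::nat. scale (of_int p gchoose i) (Z (Z u (n + int i) v) (p + q - int i) w))"

definition borcherds_rhs ::
  "(complex \<Rightarrow> 'v::ab_group_add \<Rightarrow> 'v) \<Rightarrow> ('v \<Rightarrow> int \<Rightarrow> 'v \<Rightarrow> 'v) \<Rightarrow> 'v \<Rightarrow> 'v \<Rightarrow> 'v
     \<Rightarrow> int \<Rightarrow> int \<Rightarrow> int \<Rightarrow> 'v" where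
  "borcherds_rhs scale Z u v w p q n =
     Sum_any (\<lambda>i::nat. scale ((-1) ^ i * (of_int n gchoose i))
       (Z u (p + n - int i) (Z v (q + int i) w)
        - scale ((-1) powi n) (Z v (n + q - int i) (Z u (p + int i) w))))"

locale truncated_field_map = vector_space scale
  for scale :: "complex \<Rightarrow> 'v::ab_group_add \<Rightarrow> 'v" +
  fixes U :: "'v set" and Z :: "'v \<Rightarrow> int \<Rightarrow> 'v \<Rightarrow> 'v"
  assumes subspace: "subspace U"
    and closed: "u \<in> U \<Longrightarrow> v \<in> U \<Longrightarrow> Z u k v \<in> U"
    and add_left: "u \<in> U \<Longrightarrow> u' \<in> U \<Longrightarrow> Z (u + u') k w = Z u k w + Z u' k w"
    and add_right: "u \<in> U \<Longrightarrow> Z u k (w + w') = Z u k w + Z u k w'"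
    and truncation: "u \<in> U \<Longrightarrow> \<exists>N. \<forall>k\<ge>N. Z u k w = 0"
begin

lemma zero_left [simp]: "Z 0 k w = 0"
  using add_left[of 0 0] subspace_0[OF subspace] by simp

lemma zero_right [simp]: "u \<in> U \<Longrightarrow> Z u k 0 = 0"
  using add_right[of u k 0 0] by simp

lemma finite_support:
  assumes "u \<in> U"
  shows "finite {i::nat. Z u (n + int i) w \<noteq> 0}"
proof -
  obtain N where "\<forall>k\<ge>N. Z u k w = 0"
    using truncation[OF assms] by blast
  then show ?thesis by (rule finite_shifted_support)
qed

lemma additive_sum:
  fixes F :: "'v \<Rightarrow> 'w::ab_group_add"
  assumes additive: "\<And>x y. x \<in> U \<Longrightarrow> y \<in> U \<Longrightarrow> F (x + y) = F x + F y"
    and "g ` A \<subseteq> U"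
  shows "F (sum g A) = (\<Sum>a\<in>A. F (g a))"
proof -
  have "F 0 = F 0 + F 0"
    using additive[of 0 0] subspace_0[OF subspace] by simp
  then have F0: "F 0 = 0" by (rule add_cancel_right_right[THEN iffD1])
  show ?thesis
    using assms(2)
  proof (induction A rule: infinite_finite_induct)
    case (insert a A)
    then have "sum g A \<in> U" by (auto intro: subspace_sum[OF subspace])
    with insert show ?case by (simp add: additive)
  qed (simp_all add: F0)
qed

lemma borcherds_lhs_add_left:
  assumes "u \<in> U" "u' \<in> U" "v \<in> U"
  shows "borcherds_lhs scale Z (u + u') v w p q n
         = borcherds_lhs scale Z u v w p q n + borcherds_lhs scale Z u' v w p q n"
proof -
  let ?t = "\<lambda>x i::nat. scale (of_int p gchoose i) (Z (Z x (n + int i) v) (p + q - int i) w)"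
  have fin: "finite {i. ?t x i \<noteq> 0}" if "x \<in> U" for x
    by (rule rev_finite_subset[OF finite_support[OF that, of n v]]) auto
  have "?t (u + u') i = ?t u i + ?t u' i" for i
    using assms by (simp add: add_left closed scale_right_distrib)
  then show ?thesis
    unfolding borcherds_lhs_def using Sum_any.distrib[OF fin[OF assms(1)] fin[OF assms(2)]] by simp
qed

lemma borcherds_lhs_add_right:
  assumes "u \<in> U" "v \<in> U" "v' \<in> U"
  shows "borcherds_lhs scale Z u (v + v') w p q n
         = borcherds_lhs scale Z u v w p q n + borcherds_lhs scale Z u v' w p q n"
proof -
  let ?t = "\<lambda>x i::nat. scale (of_int p gchoose i) (Z (Z u (n + int i) x) (p + q - int i) w)"
  have fin: "finite {i. ?t x i \<noteq> 0}" for x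
    by (rule rev_finite_subset[OF finite_support[OF assms(1), of n x]]) auto
  have "?t (v + v') i = ?t v i + ?t v' i" for i
    using assms by (simp add: add_left add_right closed scale_right_distrib)
  then show ?thesis
    unfolding borcherds_lhs_def using Sum_any.distrib[OF fin fin] by simp
qed

lemma borcherds_rhs_add_left:
  assumes "u \<in> U" "u' \<in> U" "v \<in> U"
  shows "borcherds_rhs scale Z (u + u') v w p q n
         = borcherds_rhs scale Z u v w p q n + borcherds_rhs scale Z u' v w p q n"
proof -
  let ?t = "\<lambda>x i::nat. scale ((-1) ^ i * (of_int n gchoose i))
       (Z x (p + n - int i) (Z v (q + int i) w)
        - scale ((-1) powi n) (Z v (n + q - int i) (Z x (p + int i) w)))"
  have fin: "finite {i. ?t x i \<noteq> 0}" if "x \<in> U" for x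
    by (rule rev_finite_subset[OF finite_UnI[OF finite_support[OF assms(3), of q w]
          finite_support[OF that, of p w]]]) (auto simp: that assms)
  have "?t (u + u') i = ?t u i + ?t u' i" for i
    using assms by (simp add: add_left add_right scale_right_distrib scale_right_diff_distrib)
  then show ?thesis
    unfolding borcherds_rhs_def using Sum_any.distrib[OF fin[OF assms(1)] fin[OF assms(2)]] by simp
qed

lemma borcherds_rhs_add_right:
  assumes "u \<in> U" "v \<in> U" "v' \<in> U"
  shows "borcherds_rhs scale Z u (v + v') w p q n
         = borcherds_rhs scale Z u v w p q n + borcherds_rhs scale Z u v' w p q n"
proof -
  let ?t = "\<lambda>x i::nat. scale ((-1) ^ i * (of_int n gchoose i))
       (Z u (p + n - int i) (Z x (q + int i) w)
        - scale ((-1) powi n) (Z x (n + q - int i) (Z u (p + int i) w)))"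
  have fin: "finite {i. ?t x i \<noteq> 0}" if "x \<in> U" for x
    by (rule rev_finite_subset[OF finite_UnI[OF finite_support[OF that, of q w]
          finite_support[OF assms(1), of p w]]]) (auto simp: that assms)
  have "?t (v + v') i = ?t v i + ?t v' i" for i
    using assms by (simp add: add_left add_right scale_right_distrib scale_right_diff_distrib)
  then show ?thesis
    unfolding borcherds_rhs_def using Sum_any.distrib[OF fin[OF assms(2)] fin[OF assms(3)]] by simp
qed

lemma borcherds_identity_from_generators:
  assumes "G \<subseteq> U"
    and sums: "\<And>x. x \<in> U \<Longrightarrow> \<exists>A (g :: 'i \<Rightarrow> 'v). g ` A \<subseteq> G \<and> x = sum g A"
    and on_G: "\<And>x y. x \<in> G \<Longrightarrow> y \<in> G
                 \<Longrightarrow> borcherds_lhs scale Z x y w p q n = borcherds_rhs scale Z x y w p q n"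
    and "u \<in> U" "v \<in> U"
  shows "borcherds_lhs scale Z u v w p q n = borcherds_rhs scale Z u v w p q n"
proof -
  obtain A and g :: "'i \<Rightarrow> 'v" where A: "g ` A \<subseteq> G" "u = sum g A"
    using sums[OF \<open>u \<in> U\<close>] by (elim exE conjE)
  obtain B and h :: "'i \<Rightarrow> 'v" where B: "h ` B \<subseteq> G" "v = sum h B"
    using sums[OF \<open>v \<in> U\<close>] by (elim exE conjE)
  have gU: "g ` A \<subseteq> U" and hU: "h ` B \<subseteq> U" using A B \<open>G \<subseteq> U\<close> by auto
  have expand: "F u v = (\<Sum>a\<in>A. \<Sum>b\<in>B. F (g a) (h b))"
    if left: "\<And>x x' y. x \<in> U \<Longrightarrow> x' \<in> U \<Longrightarrow> y \<in> U \<Longrightarrow> F (x + x') y = F x y + F x' y"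
      and right: "\<And>x y y'. x \<in> U \<Longrightarrow> y \<in> U \<Longrightarrow> y' \<in> U \<Longrightarrow> F x (y + y') = F x y + F x y'"
    for F :: "'v \<Rightarrow> 'v \<Rightarrow> 'v"
  proof -
    have "F u v = (\<Sum>a\<in>A. F (g a) v)"
      unfolding A(2) by (rule additive_sum[OF _ gU]) (simp add: left \<open>v \<in> U\<close>)
    also have "\<dots> = (\<Sum>a\<in>A. \<Sum>b\<in>B. F (g a) (h b))"
    proof (rule sum.cong[OF refl])
      fix a assume "a \<in> A"
      then have "g a \<in> U" using gU by blast
      then show "F (g a) v = (\<Sum>b\<in>B. F (g a) (h b))"
        unfolding B(2) by (intro additive_sum[OF _ hU] right)
    qed
    finally show ?thesis .
  qed
  have "borcherds_lhs scale Z u v w p q n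
        = (\<Sum>a\<in>A. \<Sum>b\<in>B. borcherds_lhs scale Z (g a) (h b) w p q n)"
    by (rule expand) (simp_all add: borcherds_lhs_add_left borcherds_lhs_add_right)
  also have "\<dots> = (\<Sum>a\<in>A. \<Sum>b\<in>B. borcherds_rhs scale Z (g a) (h b) w p q n)"
    using A(1) B(1) on_G by (intro sum.cong refl) blast
  also have "\<dots> = borcherds_rhs scale Z u v w p q n"
    by (rule expand[symmetric]) (simp_all add: borcherds_rhs_add_left borcherds_rhs_add_right)
  finally show ?thesis .
qed

end

locale toroidal_va = vector_space scale
  for scale :: "complex \<Rightarrow> 'v::ab_group_add \<Rightarrow> 'v" +
  fixes Y :: "'v \<Rightarrow> int \<Rightarrow> ('r::finite \<Rightarrow> int) \<Rightarrow> 'v \<Rightarrow> 'v" and vac :: 'v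
  assumes Y_add_left: "Y (x + y) m0 m w = Y x m0 m w + Y y m0 m w"
    and Y_scale_left: "Y (scale c x) m0 m w = scale c (Y x m0 m w)"
    and Y_add_right: "Y v m0 m (x + y) = Y v m0 m x + Y v m0 m y"
    and Y_scale_right: "Y v m0 m (scale c x) = scale c (Y v m0 m x)"
    and truncation: "\<exists>N. \<forall>m0\<ge>N. \<forall>m. Y v m0 m w = 0"
    and vacuum: "Y vac m0 m v = (if m0 = -1 \<and> m = (\<lambda>_. 0) then v else 0)"
    and creation: "m0 \<ge> 0 \<Longrightarrow> Y v m0 m vac = 0"
    and jacobi: "toroidal_jacobi scale Y"
begin

lemma Y_zero_left [simp]: "Y 0 m0 m w = 0"
  using Y_scale_left[of 0 0 m0 m w] by simp

lemma Y_zero_right [simp]: "Y v m0 m 0 = 0"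
  using Y_scale_right[of v m0 m 0 0] by simp

lemma Y_sum_left: "Y (sum f A) m0 m w = (\<Sum>a\<in>A. Y (f a) m0 m w)"
  by (induction A rule: infinite_finite_induct) (simp_all add: Y_add_left)

lemma Y_iterate:
  "Y (Y u n m v) q k w
   = Sum_any (\<lambda>i::nat. scale ((-1) ^ i * (of_int n gchoose i))
       (Y u (n - int i) m (Y v (q + int i) (\<lambda>j. k j - m j) w)
        - scale ((-1) powi n) (Y v (n + q - int i) (\<lambda>j. k j - m j) (Y u (int i) m w))))"
proof -
  have "Sum_any (\<lambda>i::nat. scale (of_int 0 gchoose i) (Y (Y u (n + int i) m v) (0 + q - int i) k w))
        = Y (Y u n m v) q k w"
    by (subst Sum_any_eq_single[where a = 0]) (auto simp: gbinomial_0_left)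
  with jacobi[unfolded toroidal_jacobi_def, rule_format, where p = 0]
  show ?thesis by (simp only: add_0)
qed

lemma vacuum_descendant_off_degree:
  assumes "k \<noteq> m"
  shows "Y (Y u n m vac) q k w = 0"
proof -
  have "(\<lambda>j. k j - m j) \<noteq> (\<lambda>_. 0)"
    using assms by (auto simp: fun_eq_iff)
  then show ?thesis by (subst Y_iterate) (simp add: vacuum)
qed

lemma vacuum_descendant_creation: "Y (Y u n m vac) (-1) m vac = Y u n m vac"
proof -
  have "Y (Y u n m vac) (-1) m vac
        = Sum_any (\<lambda>i::nat. scale ((-1) ^ i * (of_int n gchoose i))
            (Y u (n - int i) m (Y vac (-1 + int i) (\<lambda>_. 0) vac)))"
    by (subst Y_iterate) (simp add: creation)
  also have "\<dots> = Y u n m vac"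
    by (subst Sum_any_eq_single[where a = 0]) (simp_all add: vacuum)
  finally show ?thesis .
qed

definition homogeneous :: "('r \<Rightarrow> int) \<Rightarrow> 'v set" where
  "homogeneous c = {Y v (-1) c vac | v. True}"

lemma Vgr_eq_homogeneous: "Vgr Y vac m = homogeneous (\<lambda>j. - m j)"
  by (simp add: Vgr_def homogeneous_def)

lemma subspace_homogeneous: "subspace (homogeneous c)"
  unfolding subspace_def homogeneous_def
proof (intro conjI ballI allI)
  show "0 \<in> {Y v (-1) c vac | v. True}"
    using Y_zero_left by (metis (mono_tags, lifting) mem_Collect_eq)
  fix x y d
  assume "x \<in> {Y v (-1) c vac | v. True}"
  then obtain a where a: "x = Y a (-1) c vac" by blast
  then show "scale d x \<in> {Y v (-1) c vac | v. True}"
    by (auto simp: Y_scale_left[symmetric])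
  assume "y \<in> {Y v (-1) c vac | v. True}"
  then obtain b where "y = Y b (-1) c vac" by blast
  with a show "x + y \<in> {Y v (-1) c vac | v. True}"
    by (auto simp: Y_add_left[symmetric])
qed

lemma vacuum_descendant_homogeneous: "Y u n c vac \<in> homogeneous c"
  unfolding homogeneous_def using vacuum_descendant_creation[symmetric] by blast

lemma homogeneous_off_degree: "x \<in> homogeneous c \<Longrightarrow> k \<noteq> c \<Longrightarrow> Y x q k w = 0"
  unfolding homogeneous_def using vacuum_descendant_off_degree by blast

lemma homogeneous_creation: "x \<in> homogeneous c \<Longrightarrow> Y x (-1) c vac = x"
  unfolding homogeneous_def using vacuum_descendant_creation by blast

lemma descendant_expansion:
  "Y (Y u n a y) q (\<lambda>j. a j + b j) vac
   = Sum_any (\<lambda>i::nat. scale ((-1) ^ i * (of_int n gchoose i)) (Y u (n - int i) a (Y y (q + int i) b vac)))"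
  by (subst Y_iterate) (simp add: creation)

lemma Y_vacuum_descendant_homogeneous: "Y u n a (Y y q b vac) \<in> homogeneous (\<lambda>j. a j + b j)"
proof (induction "nat (- q)" arbitrary: n q rule: less_induct)
  case less
  let ?H = "homogeneous (\<lambda>j. a j + b j)"
  let ?f = "\<lambda>i::nat. scale ((-1) ^ i * (of_int n gchoose i)) (Y u (n - int i) a (Y y (q + int i) b vac))"
  have "finite {i::nat. Y y (q + int i) b vac \<noteq> 0}"
    by (rule finite_shifted_support[of 0]) (simp add: creation)
  then have "finite {i. ?f i \<noteq> 0}"
    by (rule rev_finite_subset) auto
  \<comment> \<open>The \<open>i = 0\<close> term is the element itself; all other terms have a larger \<open>q\<close>.\<close>
  then have split: "Y u n a (Y y q b vac) = Sum_any ?f - Sum_any (?f(0 := 0))"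
    by (simp add: Sum_any_split_off[where a = 0])
  have "Sum_any ?f \<in> ?H"
    unfolding descendant_expansion[symmetric] by (rule vacuum_descendant_homogeneous)
  moreover have "Sum_any (?f(0 := 0)) \<in> ?H"
  proof (rule Sum_any_in_subspace[OF subspace_homogeneous])
    fix i assume "(?f(0 := 0)) i \<noteq> 0"
    then have "i \<noteq> 0" and "Y y (q + int i) b vac \<noteq> 0"
      by (auto split: if_splits)
    then have "q + int i < 0"
      using creation by (meson not_le)
    then have "nat (- (q + int i)) < nat (- q)" using \<open>i \<noteq> 0\<close> by simp
    then have "Y u (n - int i) a (Y y (q + int i) b vac) \<in> ?H" by (rule less)
    then show "(?f(0 := 0)) i \<in> ?H"
      using subspace_scale[OF subspace_homogeneous] \<open>i \<noteq> 0\<close> by simp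
  qed
  ultimately show ?case
    unfolding split by (rule subspace_diff[OF subspace_homogeneous])
qed

lemma Y_homogeneous:
  assumes "v \<in> homogeneous b"
  shows "Y u n a v \<in> homogeneous (\<lambda>j. a j + b j)"
proof -
  obtain y where "v = Y y (-1) b vac"
    using assms unfolding homogeneous_def by blast
  then show ?thesis by (simp add: Y_vacuum_descendant_homogeneous)
qed

lemma subspace_V0: "subspace (V0 scale Y vac)"
  unfolding V0_def by (rule subspace_span)

lemma homogeneous_subset_V0: "homogeneous c \<subseteq> V0 scale Y vac"
  unfolding homogeneous_def V0_def by (auto intro: span_base)

lemma V0_eq_span_homogeneous: "V0 scale Y vac = span (\<Union>c. homogeneous c)"
  unfolding V0_def span_eq
proof (intro conjI subsetI)
  fix x assume "x \<in> {Y v m0 m vac | v m0 m. True}"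
  then have "x \<in> (\<Union>c. homogeneous c)"
    using vacuum_descendant_homogeneous by blast
  then show "x \<in> span (\<Union>c. homogeneous c)" by (rule span_base)
next
  fix x assume "x \<in> (\<Union>c. homogeneous c)"
  then show "x \<in> span {Y v m0 m vac | v m0 m. True}"
    unfolding homogeneous_def by (blast intro: span_base)
qed

lemma V0_subset_subspace:
  assumes "subspace T" and "\<And>c. homogeneous c \<subseteq> T"
  shows "V0 scale Y vac \<subseteq> T"
  unfolding V0_eq_span_homogeneous using assms by (intro span_minimal) auto

lemma Y_V0: "v \<in> V0 scale Y vac \<Longrightarrow> Y u n a v \<in> V0 scale Y vac"
proof -
  have "subspace {v. Y u n a v \<in> V0 scale Y vac}"
    using subspace_V0 by (simp add: subspace_def Y_add_right Y_scale_right)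
  moreover have "homogeneous c \<subseteq> {v. Y u n a v \<in> V0 scale Y vac}" for c
    using Y_homogeneous homogeneous_subset_V0 by blast
  ultimately show "v \<in> V0 scale Y vac \<Longrightarrow> Y u n a v \<in> V0 scale Y vac"
    using V0_subset_subspace by blast
qed

definition degrees :: "'v \<Rightarrow> ('r \<Rightarrow> int) set" where
  "degrees x = {c. \<exists>q w. Y x q c w \<noteq> 0}"

lemma degrees_add: "degrees (x + y) \<subseteq> degrees x \<union> degrees y"
  by (auto simp: degrees_def Y_add_left) blast

lemma degrees_scale: "degrees (scale a x) \<subseteq> degrees x"
  by (auto simp: degrees_def Y_scale_left)

lemma degrees_homogeneous: "x \<in> homogeneous c \<Longrightarrow> degrees x \<subseteq> {c}"
  unfolding degrees_def using homogeneous_off_degree by blast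

lemma finite_degrees: "x \<in> V0 scale Y vac \<Longrightarrow> finite (degrees x)"
proof -
  have "subspace {x. finite (degrees x)}"
    unfolding subspace_def
    using finite_subset[OF degrees_add] finite_subset[OF degrees_scale]
    by (auto simp: degrees_def)
  moreover have "homogeneous c \<subseteq> {x. finite (degrees x)}" for c
    using finite_subset[OF degrees_homogeneous] by blast
  ultimately show "x \<in> V0 scale Y vac \<Longrightarrow> finite (degrees x)"
    using V0_subset_subspace by blast
qed

lemma Y0_eq_sum: "finite A \<Longrightarrow> degrees x \<subseteq> A \<Longrightarrow> Y0 Y x k w = (\<Sum>c\<in>A. Y x k c w)"
  unfolding Y0_def by (rule Sum_any.expand_superset) (auto simp: degrees_def)

lemma Y0_homogeneous: "x \<in> homogeneous c \<Longrightarrow> Y0 Y x k w = Y x k c w"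
  using Y0_eq_sum[of "{c}"] degrees_homogeneous by simp

lemma Y0_add_left:
  assumes "finite (degrees x)" "finite (degrees y)"
  shows "Y0 Y (x + y) k w = Y0 Y x k w + Y0 Y y k w"
proof -
  let ?A = "degrees x \<union> degrees y"
  have "finite ?A" using assms by simp
  then show ?thesis
    using Y0_eq_sum[of ?A] degrees_add by (auto simp: Y_add_left sum.distrib)
qed

lemma Y0_scale_left:
  assumes "finite (degrees x)"
  shows "Y0 Y (scale a x) k w = scale a (Y0 Y x k w)"
  using Y0_eq_sum[OF assms] Y0_eq_sum[OF assms degrees_scale]
  by (simp add: Y_scale_left scale_sum_right)

lemma Y0_add_right:
  assumes "finite (degrees u)"
  shows "Y0 Y u k (w + w') = Y0 Y u k w + Y0 Y u k w'"
  using Y0_eq_sum[OF assms] by (simp add: Y_add_right sum.distrib)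

lemma Y0_scale_right:
  assumes "finite (degrees u)"
  shows "Y0 Y u k (scale a w) = scale a (Y0 Y u k w)"
  using Y0_eq_sum[OF assms] by (simp add: Y_scale_right scale_sum_right)

lemma Y0_truncation: "\<exists>N. \<forall>k\<ge>N. Y0 Y u k w = 0"
proof -
  obtain N where "\<forall>m0\<ge>N. \<forall>m. Y u m0 m w = 0"
    using truncation by blast
  then show ?thesis by (intro exI[of _ N]) (simp add: Y0_def)
qed

lemma Y0_vacuum: "Y0 Y vac k v = (if k = -1 then v else 0)"
  by (simp add: Y0_def vacuum)

lemma Y0_creation_nonneg: "0 \<le> k \<Longrightarrow> Y0 Y u k vac = 0"
  by (simp add: Y0_def creation)

lemma Y0_V0:
  assumes "u \<in> V0 scale Y vac" "v \<in> V0 scale Y vac"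
  shows "Y0 Y u k v \<in> V0 scale Y vac"
  unfolding Y0_eq_sum[OF finite_degrees[OF assms(1)] subset_refl]
  using Y_V0[OF assms(2)] by (intro subspace_sum[OF subspace_V0])

lemma Y0_creation: "u \<in> V0 scale Y vac \<Longrightarrow> Y0 Y u (-1) vac = u"
proof -
  let ?T = "{x. finite (degrees x) \<and> Y0 Y x (-1) vac = x}"
  have "subspace ?T"
    unfolding subspace_def
  proof (intro conjI ballI allI)
    show "0 \<in> ?T" by (simp add: degrees_def Y0_def)
    fix x y a assume x: "x \<in> ?T" and y: "y \<in> ?T"
    then show "x + y \<in> ?T"
      using finite_subset[OF degrees_add] by (simp add: Y0_add_left)
    from x show "scale a x \<in> ?T"
      using finite_subset[OF degrees_scale] by (simp add: Y0_scale_left)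
  qed
  moreover have "homogeneous c \<subseteq> ?T" for c
    by (auto simp: Y0_homogeneous homogeneous_creation intro: finite_subset[OF degrees_homogeneous])
  ultimately show "u \<in> V0 scale Y vac \<Longrightarrow> Y0 Y u (-1) vac = u"
    using V0_subset_subspace by blast
qed

lemma V0_decomposition: "u \<in> V0 scale Y vac \<Longrightarrow> (\<Sum>c\<in>degrees u. Y u (-1) c vac) = u"
  using Y0_creation Y0_eq_sum[OF finite_degrees subset_refl] by metis

lemma vacuum_homogeneous: "vac \<in> homogeneous (\<lambda>_. 0)"
  using vacuum_descendant_homogeneous[of vac "-1" "\<lambda>_. 0"] by (simp add: vacuum)

lemma borcherds_identity_homogeneous:
  assumes "u \<in> homogeneous a" "v \<in> homogeneous b"
  shows "borcherds_lhs scale (Y0 Y) u v w p q n = borcherds_rhs scale (Y0 Y) u v w p q n"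
proof -
  have "Y0 Y (Y0 Y u j v) s w = Y (Y u j a v) s (\<lambda>i. a i + b i) w" for j s
    using Y0_homogeneous[OF assms(1)] Y0_homogeneous[OF Y_homogeneous[OF assms(2)]] by simp
  then show ?thesis
    using jacobi[unfolded toroidal_jacobi_def, rule_format, where m = a and k = "\<lambda>i. a i + b i"]
    unfolding borcherds_lhs_def borcherds_rhs_def
    by (simp add: Y0_homogeneous[OF assms(1)] Y0_homogeneous[OF assms(2)])
qed

end

sublocale toroidal_va \<subseteq> Y0: truncated_field_map scale "V0 scale Y vac" "Y0 Y"
  by unfold_locales
    (simp_all add: subspace_V0 Y0_V0 Y0_add_left Y0_add_right finite_degrees Y0_truncation)

context toroidal_va
begin

lemma borcherds_identity_V0:
  assumes "u \<in> V0 scale Y vac" "v \<in> V0 scale Y vac"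
  shows "borcherds_lhs scale (Y0 Y) u v w p q n = borcherds_rhs scale (Y0 Y) u v w p q n"
proof (rule Y0.borcherds_identity_from_generators[OF _ _ _ assms])
  show "(\<Union>c. homogeneous c) \<subseteq> V0 scale Y vac"
    using homogeneous_subset_V0 by blast
  show "\<exists>A (g :: ('r \<Rightarrow> int) \<Rightarrow> 'v). g ` A \<subseteq> (\<Union>c. homogeneous c) \<and> x = sum g A"
    if "x \<in> V0 scale Y vac" for x
    using V0_decomposition[OF that] vacuum_descendant_homogeneous
    by (intro exI[of _ "degrees x"] exI[of _ "\<lambda>c. Y x (-1) c vac"]) auto
  show "borcherds_lhs scale (Y0 Y) x y w p q n = borcherds_rhs scale (Y0 Y) x y w p q n"
    if "x \<in> (\<Union>c. homogeneous c)" "y \<in> (\<Union>c. homogeneous c)" for x y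
    using that borcherds_identity_homogeneous by blast
qed

lemma V0_vertex_algebra: "vertex_algebra scale (V0 scale Y vac) (Y0 Y) vac"
  unfolding vertex_algebra_def
proof (intro conjI ballI allI impI)
  show "vector_space scale" by unfold_locales
  show "subspace (V0 scale Y vac)" by (rule subspace_V0)
  show "vac \<in> V0 scale Y vac"
    using vacuum_homogeneous homogeneous_subset_V0 by blast
  fix u assume u: "u \<in> V0 scale Y vac"
  have "finite (degrees (scale a u))" for a
    using finite_subset[OF degrees_scale finite_degrees[OF u]] .
  then show "Y0 Y (scale a u + u') k v = scale a (Y0 Y u k v) + Y0 Y u' k v"
    if "u' \<in> V0 scale Y vac" for u' v k a
    using that u by (simp add: Y0_add_left Y0_scale_left finite_degrees)
  show "Y0 Y u k (scale a v + v') = scale a (Y0 Y u k v) + Y0 Y u k v'" for v v' k a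
    using u by (simp add: Y0_add_right Y0_scale_right finite_degrees)
  show "\<exists>N. \<forall>k\<ge>N. Y0 Y u k v = 0" for v by (rule Y0_truncation)
  show "Y0 Y u k vac = 0" if "0 \<le> k" for k using that by (rule Y0_creation_nonneg)
  show "Y0 Y u (-1) vac = u" using u by (rule Y0_creation)
  fix v assume v: "v \<in> V0 scale Y vac"
  show "Y0 Y u k v \<in> V0 scale Y vac" for k using u v by (rule Y0_V0)
  show "Sum_any (\<lambda>i::nat. scale (of_int p gchoose i) (Y0 Y (Y0 Y u (n + int i) v) (p + q - int i) w))
      = Sum_any (\<lambda>i::nat. scale ((-1) ^ i * (of_int n gchoose i))
                 (Y0 Y u (p + n - int i) (Y0 Y v (q + int i) w)
                  - scale ((-1) powi n) (Y0 Y v (n + q - int i) (Y0 Y u (p + int i) w))))" for w p q n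
    using borcherds_identity_V0[OF u v] unfolding borcherds_lhs_def borcherds_rhs_def .
next
  show "Y0 Y vac k v = (if k = -1 then v else 0)" for k v by (rule Y0_vacuum)
qed

lemma V0_internal_direct_sum: "internal_direct_sum scale (Vgr Y vac) (V0 scale Y vac)"
  unfolding internal_direct_sum_def
proof (intro conjI allI impI ballI)
  show "subspace (Vgr Y vac m)" for m
    unfolding Vgr_eq_homogeneous by (rule subspace_homogeneous)
  have "range (Vgr Y vac) = range homogeneous"
    unfolding Vgr_eq_homogeneous by (metis (no_types, lifting) ext minus_minus surj_def range_composition)
  then show "V0 scale Y vac = span (\<Union>m. Vgr Y vac m)"
    by (simp add: V0_eq_span_homogeneous)
next
  fix F x m
  assume "finite F" and x: "\<forall>m\<in>F. x m \<in> Vgr Y vac m" and "sum x F = 0" and "m \<in> F"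
  have component: "Y (x m') (-1) (\<lambda>j. - m j) vac = (if m' = m then x m else 0)" if "m' \<in> F" for m'
  proof (cases "m' = m")
    case True
    then show ?thesis using x that homogeneous_creation unfolding Vgr_eq_homogeneous by auto
  next
    case False
    then have "(\<lambda>j. - m j) \<noteq> (\<lambda>j. - m' j)" by (metis ext minus_equation_iff)
    then show ?thesis using x that homogeneous_off_degree False unfolding Vgr_eq_homogeneous by auto
  qed
  have "0 = Y (sum x F) (-1) (\<lambda>j. - m j) vac" using \<open>sum x F = 0\<close> by simp
  also have "\<dots> = (\<Sum>m'\<in>F. if m' = m then x m else 0)"
    using component by (simp add: Y_sum_left)
  also have "\<dots> = x m" using \<open>finite F\<close> \<open>m \<in> F\<close> by simp
  finally show "x m = 0" by simp
qed

lemma Y0_Vgr: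
  assumes "u \<in> Vgr Y vac m" "v \<in> Vgr Y vac n"
  shows "Y0 Y u k v \<in> Vgr Y vac (\<lambda>j. m j + n j)"
  using Y_homogeneous[OF assms(2)[unfolded Vgr_eq_homogeneous]]
  by (simp add: Y0_homogeneous[OF assms(1)[unfolded Vgr_eq_homogeneous]] Vgr_eq_homogeneous add_ac)

end

theorem proposition3p2:
  fixes scale :: "complex \<Rightarrow> 'v::ab_group_add \<Rightarrow> 'v"
    and Y :: "'v \<Rightarrow> int \<Rightarrow> ('r::finite \<Rightarrow> int) \<Rightarrow> 'v \<Rightarrow> 'v"
    and vac :: 'v
  assumes "toroidal_vertex_algebra scale Y vac"
  shows "internal_direct_sum scale (Vgr Y vac) (V0 scale Y vac)
         \<and> vertex_graded_algebra scale (V0 scale Y vac) (Y0 Y) vac (Vgr Y vac)"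
proof -
  interpret toroidal_va scale Y vac
    using assms unfolding toroidal_vertex_algebra_def toroidal_va_def toroidal_va_axioms_def
    by (auto simp: Vector_Spaces.linear_iff)
  have "vac \<in> Vgr Y vac (\<lambda>_. 0)"
    using vacuum_homogeneous by (simp add: Vgr_eq_homogeneous)
  then show ?thesis
    using V0_internal_direct_sum V0_vertex_algebra Y0_Vgr
    unfolding vertex_graded_algebra_def by blast
qed

end
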